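(* Let $c>0$ be a constant and $G=G_{n,c/n}$ with vertex set $V=[n]$. Let $b_0=\ln^{1/4}n$ and $V_0=\{v\in V:\deg(v)\ge b_0\}$. Then with high probability there is no set $S\subseteq V_0$ with $|S|\ge \ln^{7/8}n$ such that $G^5[S]$ is connected.
   Context: For a graph $G$ and integer $i\ge1$, $G^i$ is the graph on $V(G)$ in which $u\ne v$ are adjacent iff $d_G(u,v)\le i$. "With high probability" means with probability $\to1$ as $n\to\infty$. *)

theory Defs
  imports "HOL-Probability.Probability"
begin

definition vset :: "nat \<Rightarrow> nat set" where
  "vset n = {1..n}"

definition pairs :: "nat \<Rightarrow> nat set set" where
  "pairs n = {e. e \<subseteq> vset n \<and> card e = 2}"

text \<open>Erdos-Renyi random graph G(n,p): each potential edge is present independently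
  with probability p. A graph is an indicator function on 2-element sets.\<close>
definition gnp :: "nat \<Rightarrow> real \<Rightarrow> (nat set \<Rightarrow> bool) pmf" where
  "gnp n p = Pi_pmf (pairs n) False (\<lambda>_. bernoulli_pmf p)"

definition adj :: "nat \<Rightarrow> (nat set \<Rightarrow> bool) \<Rightarrow> nat \<Rightarrow> nat \<Rightarrow> bool" where
  "adj n E u v \<longleftrightarrow> u \<in> vset n \<and> v \<in> vset n \<and> u \<noteq> v \<and> E {u, v}"

definition degree :: "nat \<Rightarrow> (nat set \<Rightarrow> bool) \<Rightarrow> nat \<Rightarrow> nat" where
  "degree n E v = card {u \<in> vset n. adj n E u v}"

definition dist_le :: "nat \<Rightarrow> (nat set \<Rightarrow> bool) \<Rightarrow> nat \<Rightarrow> nat \<Rightarrow> nat \<Rightarrow> bool" where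
  "dist_le n E i u v \<longleftrightarrow> (\<exists>k\<le>i. (u, v) \<in> {(x, y). adj n E x y} ^^ k)"

definition power_adj :: "nat \<Rightarrow> (nat set \<Rightarrow> bool) \<Rightarrow> nat \<Rightarrow> nat \<Rightarrow> nat \<Rightarrow> bool" where
  "power_adj n E i u v \<longleftrightarrow> u \<in> vset n \<and> v \<in> vset n \<and> u \<noteq> v \<and> dist_le n E i u v"

definition induced_connected :: "(nat \<Rightarrow> nat \<Rightarrow> bool) \<Rightarrow> nat set \<Rightarrow> bool" where
  "induced_connected R S \<longleftrightarrow> S \<noteq> {} \<and>
     (\<forall>u\<in>S. \<forall>v\<in>S. (u, v) \<in> {(x, y). x \<in> S \<and> y \<in> S \<and> R x y}\<^sup>*)"

definition V0 :: "nat \<Rightarrow> (nat set \<Rightarrow> bool) \<Rightarrow> nat set" where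
  "V0 n E = {v \<in> vset n. real (degree n E v) \<ge> ln (real n) powr (1/4)}"

end

theory Submission
  imports Defs "HOL-Real_Asymp.Real_Asymp"
begin

text \<open>
  The proof is a first-moment argument. Put \<open>L = ln n\<close>, \<open>b0 = L^(1/4)\<close> and
  \<open>K = \<lceil>L^(7/8)\<rceil>\<close>. If \<open>S \<subseteq> V0\<close> has at least \<open>L^(7/8)\<close> vertices and \<open>G^5[S]\<close> is connected,
  then \<open>K\<close> vertices of \<open>S\<close> can be collected one at a time along walks of length at most 5,
  so they lie in a vertex set \<open>W\<close> with \<open>|W| \<le> 5K\<close> carrying \<open>|W| - 1\<close> present edges.
  Being of degree at least \<open>b0\<close>, these \<open>K\<close> vertices meet at least \<open>K b0 / 2\<close> edges, so
  \<open>m \<approx> K b0 / 2 - 5K\<close> further present edges meet \<open>W\<close>. Hence the bad event is covered by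
  the events that a fixed "configuration" of \<open>|W| - 1 + m\<close> edges is present. Counting the
  configurations and using \<open>p = c/n\<close> bounds the probability by
  \<open>5K \<cdot> n \<cdot> (c(5K)^2 + 1)^(5K) \<cdot> (5cK)^m / m!\<close>, and the factor \<open>(5cK)^m / m! \<le> L^(-m/8)\<close>
  beats everything else, so the bound tends to 0.
\<close>

lemma finite_vset [simp]: "finite (vset n)"
  by (simp add: vset_def)

lemma card_vset [simp]: "card (vset n) = n"
  by (simp add: vset_def)

lemma finite_pairs [simp]: "finite (pairs n)"
  by (rule finite_subset[of _ "Pow (vset n)"]) (auto simp: pairs_def)

lemma adj_edge: "adj n E u v \<Longrightarrow> {u, v} \<in> pairs n \<and> E {u, v}"
  by (auto simp: adj_def pairs_def)

text \<open>A connected subgraph on \<open>W\<close> provides such an \<open>F\<close>, and this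
  edge count is all the first-moment computation needs.\<close>

definition spanned :: "nat \<Rightarrow> (nat set \<Rightarrow> bool) \<Rightarrow> nat set \<Rightarrow> nat set set \<Rightarrow> bool" where
  "spanned n E W F \<longleftrightarrow> finite W \<and> W \<subseteq> vset n \<and> F \<subseteq> {e \<in> pairs n. e \<subseteq> W \<and> E e}
     \<and> card W \<le> card F + 1"

lemma spanned_singleton: "v \<in> vset n \<Longrightarrow> spanned n E {v} {}"
  by (simp add: spanned_def)

text \<open>Appending a walk of length \<open>j\<close> that starts in \<open>W\<close>: every new vertex brings along
  the edge by which it is first reached, so \<open>W\<close> grows by at most \<open>j\<close> vertices and stays
  spanned.\<close>

lemma walk_extend:
  assumes "(a, b) \<in> {(x, y). adj n E x y} ^^ j" and "a \<in> W" and "spanned n E W F"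
  shows "\<exists>W' F'. spanned n E W' F' \<and> W \<subseteq> W' \<and> b \<in> W' \<and> card W' \<le> card W + j"
  using assms(1)
proof (induction j arbitrary: b)
  case 0
  then show ?case using assms(2,3) by auto
next
  case (Suc j)
  then obtain x where ax: "(a, x) \<in> {(x, y). adj n E x y} ^^ j" and xb: "adj n E x b"
    by (auto elim: relpow_Suc_E)
  from Suc.IH[OF ax] obtain W' F' where
    W': "spanned n E W' F'" "W \<subseteq> W'" "x \<in> W'" "card W' \<le> card W + j"
    by blast
  show ?case
  proof (cases "b \<in> W'")
    case True
    then show ?thesis using W' by auto
  next
    case False
    have "finite F'" using W'(1) finite_subset[OF _ finite_pairs] by (auto simp: spanned_def)
    moreover have "{x, b} \<notin> F'" using W'(1) False by (auto simp: spanned_def)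
    moreover have "b \<in> vset n" using xb by (auto simp: adj_def)
    ultimately have "spanned n E (insert b W') (insert {x, b} F')"
      using W'(1,3) adj_edge[OF xb] False by (auto simp: spanned_def)
    moreover have "card (insert b W') = Suc (card W')"
      using W'(1) False by (simp add: spanned_def)
    ultimately show ?thesis using W' by (intro exI[of _ "insert b W'"] exI) auto
  qed
qed

lemma rtrancl_leaves_set:
  assumes "(a, b) \<in> Q\<^sup>*" "a \<in> T" "b \<notin> T"
  shows "\<exists>x y. (x, y) \<in> Q \<and> x \<in> T \<and> y \<notin> T"
  using assms by (induction rule: rtrancl_induct) auto

text \<open>If \<open>G^5[S]\<close> is connected, then for every \<open>1 \<le> k \<le> |S|\<close> some \<open>k\<close> vertices of \<open>S\<close> lie
  in a spanned set of at most \<open>5k - 4\<close> vertices: add vertices of \<open>S\<close> one at a time along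
  \<open>G^5\<close>-edges leaving the current set, each costing a walk of length at most 5.\<close>

lemma grow_spanned:
  assumes conn: "induced_connected (power_adj n E 5) S" and Sv: "S \<subseteq> vset n"
    and k: "1 \<le> k" "k \<le> card S"
  shows "\<exists>T W F. T \<subseteq> S \<and> card T = k \<and> T \<subseteq> W \<and> spanned n E W F \<and> card W + 4 \<le> 5 * k"
  using k
proof (induction k rule: nat_induct_at_least)
  case base
  then obtain v where "v \<in> S" using conn by (auto simp: induced_connected_def)
  then show ?case using Sv spanned_singleton[of v n E]
    by (intro exI[of _ "{v}"] exI[of _ "{v}"] exI[of _ "{}"]) auto
next
  case (Suc k)
  then obtain T W F where H: "T \<subseteq> S" "card T = k" "T \<subseteq> W" "spanned n E W F" "card W + 4 \<le> 5 * k"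
    by auto
  have "T \<noteq> S" using H(2) Suc.prems by auto
  then obtain y where y: "y \<in> S" "y \<notin> T" using H(1) by blast
  have "T \<noteq> {}" using H(2) Suc.hyps by auto
  then obtain t where t: "t \<in> T" by blast
  define Q where "Q = {(x, y). x \<in> S \<and> y \<in> S \<and> power_adj n E 5 x y}"
  have "t \<in> S" using t H(1) by blast
  then have "(t, y) \<in> Q\<^sup>*" using conn y(1) unfolding induced_connected_def Q_def by simp
  from rtrancl_leaves_set[OF this t y(2)] obtain x u where xu: "(x, u) \<in> Q" "x \<in> T" "u \<notin> T"
    by blast
  then have uS: "u \<in> S" and "dist_le n E 5 x u" by (simp_all add: Q_def power_adj_def)
  then obtain j where j: "j \<le> 5" "(x, u) \<in> {(x, y). adj n E x y} ^^ j"
    unfolding dist_le_def by blast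
  have "x \<in> W" using xu(2) H(3) by blast
  then obtain W' F' where
    W': "spanned n E W' F'" "W \<subseteq> W'" "u \<in> W'" "card W' \<le> card W + j"
    using walk_extend[OF j(2) _ H(4)] by blast
  have "finite T" using finite_subset[OF subset_trans[OF H(1) Sv]] by simp
  then show ?case using H xu(3) uS W' j(1)
    by (intro exI[of _ "insert u T"] exI[of _ W'] exI[of _ F']) auto
qed

lemma degree_sum_le_edges:
  assumes "finite T"
  shows "(\<Sum>v\<in>T. degree n E v) \<le> 2 * card {e \<in> pairs n. E e \<and> e \<inter> T \<noteq> {}}"
proof -
  define P where "P = {e \<in> pairs n. E e \<and> e \<inter> T \<noteq> {}}"
  have fP: "finite P" unfolding P_def by (rule finite_subset[OF _ finite_pairs[of n]]) auto
  have f2: "finite e" "card e = 2" if "e \<in> P" for e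
    using that by (auto simp: P_def pairs_def card_eq_0_iff[symmetric])
  have "(\<Sum>v\<in>T. degree n E v) = card (Sigma T (\<lambda>v. {u \<in> vset n. adj n E u v}))"
    using assms by (simp add: card_SigmaI degree_def)
  also have "\<dots> \<le> card (Sigma P (\<lambda>e. e))"
  proof (rule card_inj_on_le)
    show "inj_on (\<lambda>(v, u). ({u, v}, v)) (Sigma T (\<lambda>v. {u \<in> vset n. adj n E u v}))"
      by (auto simp: inj_on_def doubleton_eq_iff adj_def)
    show "(\<lambda>(v, u). ({u, v}, v)) ` Sigma T (\<lambda>v. {u \<in> vset n. adj n E u v}) \<subseteq> Sigma P (\<lambda>e. e)"
      using adj_edge by (fastforce simp: P_def insert_commute)
    show "finite (Sigma P (\<lambda>e. e))" using fP f2(1) by (rule finite_SigmaI)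
  qed
  also have "\<dots> = (\<Sum>e\<in>P. card e)" using fP f2 by (simp add: card_SigmaI)
  also have "\<dots> = 2 * card P" using f2 by simp
  finally show ?thesis unfolding P_def .
qed

lemma edges_at_high_degree_set:
  assumes "T \<subseteq> V0 n E"
  shows "real (card T) * ln (real n) powr (1/4) / 2 \<le> real (card {e \<in> pairs n. E e \<and> e \<inter> T \<noteq> {}})"
proof -
  have fT: "finite T" using finite_subset[OF assms] by (simp add: V0_def)
  have "real (card T) * ln (real n) powr (1/4) = (\<Sum>v\<in>T. ln (real n) powr (1/4))" by simp
  also have "\<dots> \<le> (\<Sum>v\<in>T. real (degree n E v))"
    by (rule sum_mono) (use assms in \<open>auto simp: V0_def\<close>)
  also have "\<dots> \<le> real (2 * card {e \<in> pairs n. E e \<and> e \<inter> T \<noteq> {}})"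
    unfolding of_nat_sum[symmetric] of_nat_le_iff by (rule degree_sum_le_edges[OF fT])
  finally show ?thesis by simp
qed

text \<open>The parameters of the first-moment argument: \<open>K = \<lceil>ln(n)^(7/8)\<rceil>\<close> vertices of a bad set
  are used, and besides the at most \<open>5K\<close> spanning edges, \<open>m = \<lfloor>K b0 / 2\<rfloor> - 5K\<close> further
  edges meeting them are exhibited.\<close>

definition core_size :: "nat \<Rightarrow> nat" where
  "core_size n = nat \<lceil>ln (real n) powr (7/8)\<rceil>"

definition excess :: "nat \<Rightarrow> nat" where
  "excess n = nat \<lfloor>real (core_size n) * ln (real n) powr (1/4) / 2\<rfloor> - 5 * core_size n"

lemma core_size_bounds:
  assumes "n \<ge> 2"
  shows "ln (real n) powr (7/8) \<le> real (core_size n)" "real (core_size n) \<le> ln (real n) powr (7/8) + 1"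
    "1 \<le> core_size n"
proof -
  have pos: "0 < ln (real n) powr (7/8)" using assms by simp
  then have "real (core_size n) = of_int \<lceil>ln (real n) powr (7/8)\<rceil>"
    unfolding core_size_def by (simp add: order.strict_implies_order)
  then show "ln (real n) powr (7/8) \<le> real (core_size n)" "real (core_size n) \<le> ln (real n) powr (7/8) + 1"
    by (simp_all add: le_of_int_ceiling of_int_ceiling_le_add_one)
  from pos have "0 < \<lceil>ln (real n) powr (7/8)\<rceil>" by simp
  then show "1 \<le> core_size n" unfolding core_size_def by linarith
qed

definition configs :: "nat \<Rightarrow> nat \<Rightarrow> nat \<Rightarrow> (nat set \<times> nat set set \<times> nat set set) set" where
  "configs n w m = {(W, F, M). W \<subseteq> vset n \<and> card W = w
     \<and> F \<subseteq> {e \<in> pairs n. e \<subseteq> W} \<and> card F = w - 1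
     \<and> M \<subseteq> {e \<in> pairs n. e \<inter> W \<noteq> {}} \<and> card M = m \<and> F \<inter> M = {}}"

definition config_event :: "nat set \<times> nat set set \<times> nat set set \<Rightarrow> (nat set \<Rightarrow> bool) set" where
  "config_event = (\<lambda>(W, F, M). {E. \<forall>e\<in>F \<union> M. E e})"

definition bad_event :: "nat \<Rightarrow> (nat set \<Rightarrow> bool) set" where
  "bad_event n = {E. \<exists>S. S \<subseteq> V0 n E \<and> real (card S) \<ge> ln (real n) powr (7/8)
                       \<and> induced_connected (power_adj n E 5) S}"

text \<open>The \<open>K\<close> high-degree vertices meet at least \<open>K b0 / 2\<close> present edges, so even after
  discarding at most \<open>5K\<close> of them, \<open>m\<close> edges meeting them remain.\<close>

lemma extra_edges_exist:
  assumes "T \<subseteq> V0 n E" "card T = core_size n" "finite F0" "card F0 \<le> 5 * core_size n"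
  shows "\<exists>M. M \<subseteq> {e \<in> pairs n. E e \<and> e \<inter> T \<noteq> {}} - F0 \<and> card M = excess n"
proof -
  define P where "P = {e \<in> pairs n. E e \<and> e \<inter> T \<noteq> {}}"
  have "real (core_size n) * ln (real n) powr (1/4) / 2 \<le> real (card P)"
    using edges_at_high_degree_set[OF assms(1)] assms(2) by (simp add: P_def)
  then have "nat \<lfloor>real (core_size n) * ln (real n) powr (1/4) / 2\<rfloor> \<le> card P"
    by (simp add: nat_le_iff floor_le_iff)
  then have "excess n \<le> card P - card F0"
    using assms(4) by (simp add: excess_def)
  also have "\<dots> \<le> card (P - F0)"
    using assms(3) by (rule diff_card_le_card_Diff)
  finally obtain M where "M \<subseteq> P - F0" "card M = excess n"
    using obtain_subset_with_card_n by metis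
  then show ?thesis unfolding P_def by blast
qed

text \<open>Take \<open>K\<close> of its vertices
  inside a spanned set \<open>W\<close> of at most \<open>5K\<close> vertices, \<open>|W| - 1\<close> of its spanning edges,
  and \<open>m\<close> further present edges meeting the \<open>K\<close> vertices.\<close>

lemma bad_event_covered:
  assumes "n \<ge> 2"
  shows "bad_event n \<subseteq> (\<Union>w\<in>{1..5 * core_size n}.
            \<Union>x\<in>configs n w (excess n). config_event x)"
proof
  fix E assume "E \<in> bad_event n"
  then obtain S where S: "S \<subseteq> V0 n E" "ln (real n) powr (7/8) \<le> real (card S)"
    "induced_connected (power_adj n E 5) S" unfolding bad_event_def by blast
  define K where "K = core_size n"
  have K1: "1 \<le> K" using core_size_bounds(3)[OF assms] by (simp add: K_def)
  have "K \<le> card S" using S(2) by (simp add: K_def core_size_def nat_le_iff ceiling_le_iff)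
  moreover have Sv: "S \<subseteq> vset n" using S(1) by (auto simp: V0_def)
  ultimately obtain T W F where TW: "T \<subseteq> S" "card T = K" "T \<subseteq> W" "spanned n E W F"
    "card W + 4 \<le> 5 * K"
    using grow_spanned[OF S(3) Sv K1] by blast
  define w where "w = card W"
  have W: "finite W" "W \<subseteq> vset n" "F \<subseteq> {e \<in> pairs n. e \<subseteq> W \<and> E e}" "w \<le> card F + 1"
    using TW(4) by (auto simp: spanned_def w_def)
  have "W \<noteq> {}" using TW(2,3) K1 by auto
  then have w: "1 \<le> w" "w \<le> 5 * K" using W(1) TW(5) by (auto simp: w_def Suc_le_eq card_gt_0_iff)
  have fF: "finite F" using W(3) finite_subset[OF _ finite_pairs] by blast
  obtain F0 where F0: "F0 \<subseteq> F" "card F0 = w - 1"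
  proof -
    have "w - 1 \<le> card F" using W(4) by simp
    then show ?thesis using obtain_subset_with_card_n that by metis
  qed
  have "finite F0" using F0(1) fF finite_subset by blast
  moreover have "card F0 \<le> 5 * core_size n" using F0(2) w(2) by (simp add: K_def)
  ultimately obtain M where M: "M \<subseteq> {e \<in> pairs n. E e \<and> e \<inter> T \<noteq> {}} - F0" "card M = excess n"
    using extra_edges_exist[of T n E F0] TW(1,2) S(1) by (auto simp: K_def)
  have config: "(W, F0, M) \<in> configs n w (excess n)"
    using W F0 M TW(3) unfolding configs_def w_def by blast
  have "\<forall>e\<in>F0 \<union> M. E e" using W(3) F0(1) M(1) by auto
  then have "E \<in> (\<Union>x\<in>configs n w (excess n). config_event x)"
    by (intro UN_I[OF config]) (simp add: config_event_def)
  then show "E \<in> (\<Union>w\<in>{1..5 * core_size n}.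
            \<Union>x\<in>configs n w (excess n). config_event x)"
    using w by (intro UN_I[of w]) (auto simp: K_def)
qed

lemma prob_all_edges:
  assumes "D \<subseteq> pairs n" and "0 \<le> p" "p \<le> 1"
  shows "measure_pmf.prob (gnp n p) {E. \<forall>e\<in>D. E e} = p ^ card D"
proof -
  define B where "B = (\<lambda>e. if e \<in> D then {True} else (UNIV :: bool set))"
  have "{E. \<forall>e\<in>D. E e} = Pi (pairs n) B"
    using assms(1) by (auto simp: B_def Pi_def)
  then have "measure_pmf.prob (gnp n p) {E. \<forall>e\<in>D. E e}
      = (\<Prod>e\<in>pairs n. measure_pmf.prob (bernoulli_pmf p) (B e))"
    by (simp add: gnp_def measure_Pi_pmf_Pi)
  also have "\<dots> = (\<Prod>e\<in>pairs n. if e \<in> D then p else 1)"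
    by (intro prod.cong) (auto simp: B_def assms(2,3) measure_pmf_single)
  also have "\<dots> = p ^ card D"
    using assms(1) by (simp add: prod.If_cases Int_absorb1)
  finally show ?thesis .
qed

lemma card_subsets_fact_le:
  assumes "finite A" "card A \<le> N"
  shows "card {F. F \<subseteq> A \<and> card F = k} * fact k \<le> N ^ k"
proof -
  have "card {F. F \<subseteq> A \<and> card F = k} * fact k = (card A choose k) * fact k"
    by (simp add: n_subsets[OF assms(1)])
  also have "\<dots> \<le> card A ^ k" by (rule binomial_fact_pow)
  also have "\<dots> \<le> N ^ k" by (rule power_mono[OF assms(2)]) simp
  finally show ?thesis .
qed

lemma card_subsets_le:
  assumes "finite A" "card A \<le> N"
  shows "card {F. F \<subseteq> A \<and> card F = k} \<le> N ^ k"
  using card_subsets_fact_le[OF assms, of k] fact_ge_1[of k, where 'a = nat]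
  by (metis le_trans mult_le_mono2 nat_mult_1_right)

lemma card_pairs_inside: "finite W \<Longrightarrow> card {e \<in> pairs n. e \<subseteq> W} \<le> card W * card W"
proof -
  assume fW: "finite W"
  have "{e \<in> pairs n. e \<subseteq> W} \<subseteq> (\<lambda>(a, b). {a, b}) ` (W \<times> W)"
    by (auto simp: pairs_def card_2_iff image_iff)
  then have "card {e \<in> pairs n. e \<subseteq> W} \<le> card (W \<times> W)"
    using fW by (meson card_image_le card_mono finite_SigmaI finite_imageI order_trans)
  then show ?thesis by (simp add: card_cartesian_product)
qed

lemma card_pairs_meeting: "finite W \<Longrightarrow> card {e \<in> pairs n. e \<inter> W \<noteq> {}} \<le> card W * n"
proof -
  assume fW: "finite W"
  have "{e \<in> pairs n. e \<inter> W \<noteq> {}} \<subseteq> (\<lambda>(a, b). {a, b}) ` (W \<times> vset n)"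
  proof
    fix e assume e: "e \<in> {e \<in> pairs n. e \<inter> W \<noteq> {}}"
    then obtain a b where ab: "e = {a, b}" and "e \<subseteq> vset n"
      by (auto simp: pairs_def card_2_iff)
    moreover have "a \<in> W \<or> b \<in> W" using e ab by auto
    ultimately show "e \<in> (\<lambda>(a, b). {a, b}) ` (W \<times> vset n)"
      by (auto simp: image_iff intro: bexI[of _ "(a, b)"] bexI[of _ "(b, a)"])
  qed
  then have "card {e \<in> pairs n. e \<inter> W \<noteq> {}} \<le> card (W \<times> vset n)"
    using fW by (meson card_image_le card_mono finite_SigmaI finite_imageI finite_vset order_trans)
  then show ?thesis by (simp add: card_cartesian_product)
qed

lemma finite_configs: "finite (configs n w m)"
  by (rule finite_subset[of _ "Pow (vset n) \<times> Pow (pairs n) \<times> Pow (pairs n)"])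
    (auto simp: configs_def)

lemma card_configs:
  "card (configs n w m) * fact m \<le> n ^ w * (w * w) ^ (w - 1) * (w * n) ^ m"
proof -
  define Ws where "Ws = {W. W \<subseteq> vset n \<and> card W = w}"
  define Fs where "Fs = (\<lambda>W. {F. F \<subseteq> {e \<in> pairs n. e \<subseteq> W} \<and> card F = w - 1})"
  define Ms where "Ms = (\<lambda>W. {M. M \<subseteq> {e \<in> pairs n. e \<inter> W \<noteq> {}} \<and> card M = m})"
  have fin: "finite Ws" "finite (Fs W)" "finite (Ms W)" for W
    unfolding Ws_def Fs_def Ms_def
    by (auto intro: finite_subset[of _ "Pow (vset n)"] finite_subset[of _ "Pow (pairs n)"])
  have term_bound: "card (Fs W) * (card (Ms W) * fact m) \<le> (w * w) ^ (w - 1) * (w * n) ^ m"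
    if "W \<in> Ws" for W
  proof (rule mult_le_mono)
    have fW: "finite W" and cW: "card W = w"
      using that finite_subset[OF _ finite_vset] by (auto simp: Ws_def)
    show "card (Fs W) \<le> (w * w) ^ (w - 1)"
      unfolding Fs_def using card_pairs_inside[OF fW, of n] cW
      by (intro card_subsets_le) (auto intro: finite_subset[OF _ finite_pairs])
    show "card (Ms W) * fact m \<le> (w * n) ^ m"
      unfolding Ms_def using card_pairs_meeting[OF fW, of n] cW
      by (intro card_subsets_fact_le) (auto intro: finite_subset[OF _ finite_pairs])
  qed
  have "configs n w m \<subseteq> Sigma Ws (\<lambda>W. Fs W \<times> Ms W)"
    by (auto simp: configs_def Ws_def Fs_def Ms_def)
  then have "card (configs n w m) \<le> card (Sigma Ws (\<lambda>W. Fs W \<times> Ms W))"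
    by (rule card_mono[rotated]) (use fin in auto)
  also have "\<dots> = (\<Sum>W\<in>Ws. card (Fs W) * card (Ms W))"
    using fin by (simp add: card_cartesian_product)
  finally have "card (configs n w m) * fact m \<le> (\<Sum>W\<in>Ws. card (Fs W) * card (Ms W)) * fact m"
    by simp
  also have "\<dots> = (\<Sum>W\<in>Ws. card (Fs W) * (card (Ms W) * fact m))"
    by (simp add: sum_distrib_right mult.assoc)
  also have "\<dots> \<le> card Ws * ((w * w) ^ (w - 1) * (w * n) ^ m)"
    using sum_mono[OF term_bound] by simp
  also have "card Ws \<le> n ^ w"
    unfolding Ws_def by (rule card_subsets_le) simp_all
  finally show ?thesis by (simp add: mult.assoc mult_right_mono)
qed

lemma prob_configs_le:
  assumes "0 \<le> p" "p \<le> 1"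
  shows "measure_pmf.prob (gnp n p) (\<Union>x\<in>configs n w m. config_event x)
     \<le> real (card (configs n w m)) * p ^ (w - 1 + m)"
proof -
  have "measure_pmf.prob (gnp n p) (\<Union>x\<in>configs n w m. config_event x)
     \<le> (\<Sum>x\<in>configs n w m. measure_pmf.prob (gnp n p) (config_event x))"
    by (rule measure_pmf.finite_measure_subadditive_finite) (auto simp: finite_configs)
  also have "\<dots> = (\<Sum>x\<in>configs n w m. p ^ (w - 1 + m))"
  proof (rule sum.cong[OF refl], clarify)
    fix W F M assume x: "(W, F, M) \<in> configs n w m"
    then have FM: "F \<union> M \<subseteq> pairs n" "card F = w - 1" "card M = m" "F \<inter> M = {}"
      by (auto simp: configs_def)
    have "finite F" "finite M" using FM(1) finite_subset[OF _ finite_pairs] by blast+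
    then have "card (F \<union> M) = w - 1 + m" using FM(2-4) by (simp add: card_Un_disjoint)
    then show "measure_pmf.prob (gnp n p) (config_event (W, F, M)) = p ^ (w - 1 + m)"
      using prob_all_edges[OF FM(1) assms] by (simp add: config_event_def)
  qed
  finally show ?thesis by simp
qed

text \<open>For \<open>p = c/n\<close> all powers of \<open>n\<close> but one cancel:
  some configuration is present with probability at most \<open>n (cw^2)^(w-1) (cw)^m / m!\<close>.\<close>

lemma prob_configs_sparse:
  assumes n: "n > 0" and c: "0 \<le> c" "c \<le> real n" and w: "1 \<le> w"
  shows "measure_pmf.prob (gnp n (c / real n)) (\<Union>x\<in>configs n w m. config_event x)
     \<le> real n * (c * real w ^ 2) ^ (w - 1) * (c * real w) ^ m / fact m"
proof -
  define p where "p = c / real n"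
  have p: "0 \<le> p" "p \<le> 1" using n c by (auto simp: p_def)
  have "real (card (configs n w m) * fact m) \<le> real (n ^ w * (w * w) ^ (w - 1) * (w * n) ^ m)"
    using card_configs[of n w m] by (simp only: of_nat_le_iff)
  then have "real (card (configs n w m)) * fact m \<le> real n ^ w * (real w * real w) ^ (w - 1) * (real w * real n) ^ m"
    by simp
  then have card: "real (card (configs n w m)) \<le> real n ^ w * (real w * real w) ^ (w - 1) * (real w * real n) ^ m / fact m"
    by (simp add: pos_le_divide_eq)
  obtain v where v: "w = Suc v" using w by (cases w) auto
  have "real n ^ w * (real w * real w) ^ (w - 1) * (real w * real n) ^ m * p ^ (w - 1 + m)
      = real n * (real n * p) ^ v * (real n * p) ^ m * (real w ^ 2) ^ v * real w ^ m"
    by (simp add: v power_add power_mult_distrib power2_eq_square)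
  also have "\<dots> = real n * (c * real w ^ 2) ^ (w - 1) * (c * real w) ^ m"
    using n by (simp add: v p_def power_mult_distrib)
  finally have algebra: "real n ^ w * (real w * real w) ^ (w - 1) * (real w * real n) ^ m * p ^ (w - 1 + m)
      = real n * (c * real w ^ 2) ^ (w - 1) * (c * real w) ^ m" .
  have "measure_pmf.prob (gnp n p) (\<Union>x\<in>configs n w m. config_event x)
      \<le> real (card (configs n w m)) * p ^ (w - 1 + m)"
    by (rule prob_configs_le[OF p])
  also have "\<dots> \<le> real n ^ w * (real w * real w) ^ (w - 1) * (real w * real n) ^ m / fact m * p ^ (w - 1 + m)"
    by (rule mult_right_mono[OF card]) (use p in simp)
  also have "\<dots> = real n * (c * real w ^ 2) ^ (w - 1) * (c * real w) ^ m / fact m"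
    using algebra by simp
  finally show ?thesis unfolding p_def .
qed

lemma config_weight_mono:
  fixes c :: real
  assumes "0 \<le> c" "1 \<le> w" "w \<le> N"
  shows "(c * real w ^ 2) ^ (w - 1) * (c * real w) ^ m \<le> (c * real N ^ 2 + 1) ^ N * (c * real N) ^ m"
proof (rule mult_mono)
  have "c * real w ^ 2 \<le> c * real N ^ 2"
    using assms by (intro mult_left_mono power_mono) auto
  then have "(c * real w ^ 2) ^ (w - 1) \<le> (c * real N ^ 2 + 1) ^ (w - 1)"
    using assms(1) by (intro power_mono) auto
  also have "\<dots> \<le> (c * real N ^ 2 + 1) ^ N"
    using assms by (intro power_increasing) auto
  finally show "(c * real w ^ 2) ^ (w - 1) \<le> (c * real N ^ 2 + 1) ^ N" .
  show "(c * real w) ^ m \<le> (c * real N) ^ m"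
    using assms by (intro power_mono mult_left_mono) auto
qed (use assms in auto)

lemma prob_bad_event_le:
  assumes n: "n \<ge> 2" and c: "0 \<le> c" "c \<le> real n"
  defines "N \<equiv> 5 * core_size n" and "m \<equiv> excess n"
  shows "measure_pmf.prob (gnp n (c / real n)) (bad_event n)
     \<le> real N * (real n * (c * real N ^ 2 + 1) ^ N * (c * real N) ^ m / fact m)"
proof -
  let ?P = "measure_pmf.prob (gnp n (c / real n))"
  have "?P (bad_event n) \<le> ?P (\<Union>w\<in>{1..N}. \<Union>x\<in>configs n w m. config_event x)"
    using bad_event_covered[OF n] unfolding N_def m_def
    by (rule measure_pmf.finite_measure_mono) simp
  also have "\<dots> \<le> (\<Sum>w\<in>{1..N}. ?P (\<Union>x\<in>configs n w m. config_event x))"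
    by (rule measure_pmf.finite_measure_subadditive_finite) auto
  also have "\<dots> \<le> (\<Sum>w\<in>{1..N}. real n * (c * real N ^ 2 + 1) ^ N * (c * real N) ^ m / fact m)"
  proof (rule sum_mono)
    fix w assume w: "w \<in> {1..N}"
    have "?P (\<Union>x\<in>configs n w m. config_event x)
        \<le> real n * ((c * real w ^ 2) ^ (w - 1) * (c * real w) ^ m) / fact m"
      using prob_configs_sparse[of n c w m] n c w by (simp add: mult.assoc)
    also have "\<dots> \<le> real n * ((c * real N ^ 2 + 1) ^ N * (c * real N) ^ m) / fact m"
      using config_weight_mono[of c w N m] c w by (intro divide_right_mono mult_left_mono) auto
    finally show "?P (\<Union>x\<in>configs n w m. config_event x)
        \<le> real n * (c * real N ^ 2 + 1) ^ N * (c * real N) ^ m / fact m"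
      by (simp add: mult.assoc)
  qed
  also have "\<dots> = real N * (real n * (c * real N ^ 2 + 1) ^ N * (c * real N) ^ m / fact m)"
    by simp
  finally show ?thesis .
qed

lemma exp_ge_power_over_fact:
  fixes x :: real
  assumes "0 \<le> x"
  shows "x ^ m / fact m \<le> exp x"
proof -
  have s: "(\<lambda>k. x ^ k / fact k) sums exp x"
    using exp_converges[of x] by (simp add: divide_inverse scaleR_conv_of_real mult.commute)
  have "(\<Sum>k\<in>{m}. x ^ k / fact k) \<le> (\<Sum>k. x ^ k / fact k)"
    by (rule sum_le_suminf) (use s assms in \<open>auto simp: sums_iff\<close>)
  then show ?thesis using s by (simp add: sums_iff)
qed

lemma power_over_fact_le:
  fixes x :: real
  assumes "0 \<le> x"
  shows "x ^ m / fact m \<le> (exp 1 * x / real m) ^ m"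
proof (cases "m = 0")
  case False
  have "real m ^ m \<le> exp (real m) * fact m"
    using exp_ge_power_over_fact[of "real m" m] by (simp add: divide_le_eq mult.commute)
  then have "x ^ m * real m ^ m \<le> x ^ m * (exp 1 ^ m * fact m)"
    using assms by (intro mult_left_mono) (simp_all add: exp_of_nat_mult[symmetric])
  then show ?thesis
    using False by (simp add: power_divide power_mult_distrib divide_simps mult_ac)
qed simp

lemma excess_lower:
  assumes n: "n \<ge> 2" and b: "24 \<le> ln (real n) powr (1/4)"
  shows "real (core_size n) * ln (real n) powr (1/4) / 4 \<le> real (excess n)"
proof -
  define K where "K = core_size n"
  define A where "A = real K * ln (real n) powr (1/4) / 2"
  have K1: "1 \<le> real K" using core_size_bounds(3)[OF n] by (simp add: K_def)
  have A12: "12 * real K \<le> A" using mult_left_mono[OF b, of "real K"] by (simp add: A_def)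
  have fl: "A - 1 < of_int \<lfloor>A\<rfloor>" by linarith
  have nA: "real (nat \<lfloor>A\<rfloor>) = of_int \<lfloor>A\<rfloor>" using A12 K1 by simp
  then have "5 * K \<le> nat \<lfloor>A\<rfloor>" using fl A12 K1 by linarith
  then have "real (excess n) = real (nat \<lfloor>A\<rfloor>) - 5 * real K"
    by (simp add: excess_def A_def K_def of_nat_diff)
  then have "A / 2 \<le> real (excess n)" using fl nA A12 K1 by linarith
  then show ?thesis by (simp add: A_def K_def)
qed

lemma ln_ge_one: "n \<ge> 3 \<Longrightarrow> 1 \<le> ln (real n)"
proof -
  assume n: "n \<ge> 3"
  have "exp 1 \<le> (3::real)" using exp_le by simp
  also have "\<dots> \<le> real n" using n by simp
  finally show ?thesis using n by (simp add: ln_ge_iff)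
qed

text \<open>The decisive factor: as \<open>m \<ge> K b0 / 4\<close>, \<open>(5cK)^m / m! \<le> (20ce / b0)^m \<le> L^(-m/8)\<close>,
  which is \<open>exp(-ln L \<cdot> L^(9/8) / 32)\<close> with \<open>L = ln n\<close>.\<close>

lemma excess_factor_bound:
  assumes n: "n \<ge> 3" and c: "0 \<le> c"
    and b: "24 \<le> ln (real n) powr (1/4)" and r: "20 * c * exp 1 \<le> ln (real n) powr (1/8)"
  defines "L \<equiv> ln (real n)"
  shows "(c * real (5 * core_size n)) ^ excess n / fact (excess n) \<le> exp (- ln L * L powr (9/8) / 32)"
proof -
  define K where "K = core_size n"
  define m where "m = excess n"
  define b0 where "b0 = L powr (1/4)"
  have L1: "1 \<le> L" using ln_ge_one[OF n] by (simp add: L_def)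
  have K_lo: "L powr (7/8) \<le> real K" using core_size_bounds(1) n by (simp add: K_def L_def)
  have K1: "1 \<le> real K" using core_size_bounds(3) n by (simp add: K_def)
  have m_lo: "real K * b0 / 4 \<le> real m"
    using excess_lower[of n] n b by (simp add: K_def m_def b0_def L_def)
  have b0: "24 \<le> b0" using b by (simp add: b0_def L_def)
  then have "0 < real K * b0 / 4" using K1 by simp
  then have m_pos: "0 < real m" using m_lo by linarith
  have ratio: "exp 1 * (c * real (5 * K)) / real m \<le> L powr (-1/8)"
  proof -
    have "exp 1 * (c * real (5 * K)) / real m \<le> exp 1 * (c * real (5 * K)) / (real K * b0 / 4)"
      using m_lo m_pos K1 b0 c by (intro divide_left_mono) auto
    also have "\<dots> = 20 * c * exp 1 / b0" using K1 by (simp add: field_simps)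
    also have "\<dots> \<le> L powr (1/8) / b0" using r b0 by (simp add: L_def divide_right_mono)
    also have "\<dots> = L powr (-1/8)" using L1 by (simp add: b0_def powr_diff[symmetric])
    finally show ?thesis .
  qed
  have "(c * real (5 * K)) ^ m / fact m \<le> (exp 1 * (c * real (5 * K)) / real m) ^ m"
    using c by (intro power_over_fact_le) simp
  also have "\<dots> \<le> (L powr (-1/8)) ^ m"
    using ratio c m_pos by (intro power_mono) auto
  also have "\<dots> = L powr (- real m / 8)"
    using L1 by (simp add: powr_realpow[symmetric] powr_powr)
  also have "\<dots> \<le> L powr (- (L powr (7/8) * b0 / 32))"
  proof (rule powr_mono[OF _ L1])
    have "L powr (7/8) * b0 \<le> real K * b0" using K_lo b0 by (intro mult_right_mono) auto
    then show "- real m / 8 \<le> - (L powr (7/8) * b0 / 32)" using m_lo by linarith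
  qed
  also have "L powr (7/8) * b0 = L powr (9/8)"
    by (simp add: b0_def powr_add[symmetric])
  also have "L powr (- (L powr (9/8) / 32)) = exp (- ln L * L powr (9/8) / 32)"
    using L1 by (simp add: powr_def mult.commute)
  finally show ?thesis by (simp add: K_def m_def)
qed

text \<open>The factor coming from the spanning edges is only \<open>exp(O(L^(7/8) ln L))\<close>.\<close>

lemma vertex_factor_bound:
  assumes n: "n \<ge> 3" and c: "0 \<le> c" "c \<le> ln (real n)"
  defines "L \<equiv> ln (real n)"
  shows "(c * real (5 * core_size n) ^ 2 + 1) ^ (5 * core_size n)
     \<le> (25 * L * (L powr (7/8) + 1) ^ 2 + 1) powr (5 * (L powr (7/8) + 1))"
proof -
  define K where "K = core_size n"
  define B where "B = 25 * L * (L powr (7/8) + 1) ^ 2 + 1"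
  have K_hi: "real K \<le> L powr (7/8) + 1" using core_size_bounds(2) n by (simp add: K_def L_def)
  have L1: "1 \<le> L" using ln_ge_one[OF n] by (simp add: L_def)
  then have B1: "1 \<le> B" by (simp add: B_def)
  have "c * real K ^ 2 \<le> L * (L powr (7/8) + 1) ^ 2"
    using c K_hi by (intro mult_mono power_mono) (auto simp: L_def)
  then have "c * real (5 * K) ^ 2 + 1 \<le> B"
    by (simp add: B_def power_mult_distrib)
  then have "(c * real (5 * K) ^ 2 + 1) ^ (5 * K) \<le> B ^ (5 * K)"
    using c by (intro power_mono) auto
  also have "\<dots> = B powr real (5 * K)" using B1 by (subst powr_realpow) auto
  also have "\<dots> \<le> B powr (5 * (L powr (7/8) + 1))" using K_hi B1 by (intro powr_mono) auto
  finally show ?thesis by (simp add: K_def B_def)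
qed

definition tail_bound :: "real \<Rightarrow> real" where
  "tail_bound x = 5 * (ln x powr (7/8) + 1) * x
     * (25 * ln x * (ln x powr (7/8) + 1) ^ 2 + 1) powr (5 * (ln x powr (7/8) + 1))
     * exp (- ln (ln x) * ln x powr (9/8) / 32)"

lemma tail_bound_tendsto_zero: "(tail_bound \<longlongrightarrow> 0) at_top"
  unfolding tail_bound_def by real_asymp

lemma prob_bad_event_tail:
  assumes n: "n \<ge> 3" and c: "0 \<le> c" "c \<le> ln (real n)"
    and b: "24 \<le> ln (real n) powr (1/4)" and r: "20 * c * exp 1 \<le> ln (real n) powr (1/8)"
  shows "measure_pmf.prob (gnp n (c / real n)) (bad_event n) \<le> tail_bound (real n)"
proof -
  define L where "L = ln (real n)"
  define N where "N = 5 * core_size n"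
  define m where "m = excess n"
  have "c \<le> real n" using c(2) ln_le_minus_one[of "real n"] n by simp
  then have "measure_pmf.prob (gnp n (c / real n)) (bad_event n)
      \<le> real N * (real n * (c * real N ^ 2 + 1) ^ N * ((c * real N) ^ m / fact m))"
    using prob_bad_event_le[of n c] n c by (simp add: N_def m_def)
  also have "\<dots> \<le> (5 * (L powr (7/8) + 1)) * (real n
      * (25 * L * (L powr (7/8) + 1) ^ 2 + 1) powr (5 * (L powr (7/8) + 1))
      * exp (- ln L * L powr (9/8) / 32))"
  proof (intro mult_mono mult_left_mono)
    show "real N \<le> 5 * (L powr (7/8) + 1)"
      using core_size_bounds(2)[of n] n by (simp add: N_def L_def)
    show "(c * real N ^ 2 + 1) ^ N \<le> (25 * L * (L powr (7/8) + 1) ^ 2 + 1) powr (5 * (L powr (7/8) + 1))"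
      using vertex_factor_bound[OF n c] by (simp add: N_def L_def)
    show "(c * real N) ^ m / fact m \<le> exp (- ln L * L powr (9/8) / 32)"
      using excess_factor_bound[OF n c(1) b r] by (simp add: N_def m_def L_def)
  qed (use c in auto)
  also have "\<dots> = tail_bound (real n)" by (simp add: tail_bound_def L_def mult.assoc)
  finally show ?thesis .
qed

lemma eventually_ge_at_top_real:
  "filterlim (f :: real \<Rightarrow> real) at_top at_top \<Longrightarrow> eventually (\<lambda>n. C \<le> f (real n)) sequentially"
proof -
  assume "filterlim f at_top at_top"
  then have "filterlim (\<lambda>n. f (real n)) at_top sequentially"
    by (rule filterlim_compose[OF _ filterlim_real_sequentially])
  then show ?thesis by (simp add: filterlim_at_top)
qed

lemma prob_good_eq:
  "measure_pmf.prob (gnp n p)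
     {E. \<not> (\<exists>S. S \<subseteq> V0 n E \<and> real (card S) \<ge> ln (real n) powr (7/8)
               \<and> induced_connected (power_adj n E 5) S)}
   = 1 - measure_pmf.prob (gnp n p) (bad_event n)"
proof -
  have "{E. \<not> (\<exists>S. S \<subseteq> V0 n E \<and> real (card S) \<ge> ln (real n) powr (7/8)
               \<and> induced_connected (power_adj n E 5) S)} = space (measure_pmf (gnp n p)) - bad_event n"
    by (auto simp: bad_event_def)
  also have "measure_pmf.prob (gnp n p) (space (measure_pmf (gnp n p)) - bad_event n)
      = 1 - measure_pmf.prob (gnp n p) (bad_event n)"
    by (rule measure_pmf.prob_compl) simp
  finally show ?thesis .
qed

theorem mainTheorem7:
  fixes c :: real
  assumes "c > 0"
  shows "(\<lambda>n. measure_pmf.prob (gnp n (c / real n))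
            {E. \<not> (\<exists>S. S \<subseteq> V0 n E \<and> real (card S) \<ge> ln (real n) powr (7/8)
                       \<and> induced_connected (power_adj n E 5) S)})
         \<longlonglongrightarrow> 1"
proof -
  define Q where "Q = (\<lambda>n. measure_pmf.prob (gnp n (c / real n)) (bad_event n))"
  have l4: "filterlim (\<lambda>x::real. ln x powr (1/4)) at_top at_top"
    and l8: "filterlim (\<lambda>x::real. ln x powr (1/8)) at_top at_top" by real_asymp+
  have upper: "eventually (\<lambda>n. Q n \<le> tail_bound (real n)) sequentially"
    using eventually_ge_at_top[of 3] eventually_ge_at_top_real[OF ln_at_top, of c]
      eventually_ge_at_top_real[OF l4, of 24] eventually_ge_at_top_real[OF l8, of "20 * c * exp 1"]
  proof eventually_elim
    case (elim n)
    then show ?case unfolding Q_def using assms by (intro prob_bad_event_tail) simp_all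
  qed
  have lower: "eventually (\<lambda>n. 0 \<le> Q n) sequentially" by (simp add: Q_def)
  have "(\<lambda>n. tail_bound (real n)) \<longlonglongrightarrow> 0"
    using filterlim_compose[OF tail_bound_tendsto_zero filterlim_real_sequentially] .
  then have "Q \<longlonglongrightarrow> 0" by (rule tendsto_sandwich[OF lower upper tendsto_const])
  then have "(\<lambda>n. 1 - Q n) \<longlonglongrightarrow> 1 - 0" by (intro tendsto_intros)
  then show ?thesis unfolding prob_good_eq Q_def by simp
qed

end
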